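(* Let $I=[0,1]$, let $k\in\mathbb N\cup\{0,\infty\}$, and let $C^{(k)}(I)$ be the space of $k$-times continuously differentiable scalar-valued functions on $I$. Let $\{T_n\}_{n\in\mathbb N}$ be a sequence of positive linear maps $T_n:C^{(k)}(I)\to C(I)$. (i) If $T_ng\to g$ pointwise on $I$ for each $g\in\{1,x,x^2\}$, then $T_nf\to f$ pointwise on $I$ for every $f\in C^{(k)}(I)$. (ii) If $T_ng\to g$ uniformly on $I$ for each $g\in\{1,x,x^2\}$, then $T_nf\to f$ uniformly on $I$ for every $f\in C^{(k)}(I)$.
   Context: $C(I)$ is the space of continuous scalar-valued (real or complex) functions on $I$, with the same scalar field as $C^{(k)}(I)$. A linear map $T$ is positive if $Tf\ge0$ whenever $f\ge0$. Here $x$ and $x^2$ denote the functions $t\mapsto t$ and $t\mapsto t^2$. *)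

theory Defs
  imports "HOL-Analysis.Analysis" "HOL-Library.Extended_Nat"
begin

abbreviation unitI :: "real set" where "unitI \<equiv> {0..1}"

text \<open>C^(k)(I) for k in N u {infinity} (k :: enat): f is k-times continuously
  differentiable on [0,1] (one-sided derivatives at the endpoints).  D j is the
  j-th derivative; D 0 = f.\<close>
definition Ck :: "enat \<Rightarrow> (real \<Rightarrow> 'a::real_normed_vector) \<Rightarrow> bool" where
  "Ck k f \<longleftrightarrow> (\<exists>D. D 0 = f \<and>
      (\<forall>j. enat j < k \<longrightarrow>
         (\<forall>x\<in>unitI. (D j has_vector_derivative D (Suc j) x) (at x within unitI))) \<and>
      (\<forall>j. enat j \<le> k \<longrightarrow> continuous_on unitI (D j)))"

definition nonneg_scalar :: "'a::real_normed_algebra_1 \<Rightarrow> bool" where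
  "nonneg_scalar z \<longleftrightarrow> (\<exists>r::real. r \<ge> 0 \<and> z = of_real r)"

text \<open>T is a positive linear map C^(k)(I) -> C(I); functions are compared on I only.\<close>
definition pos_lin_map :: "enat \<Rightarrow> ((real \<Rightarrow> 'a::real_normed_field) \<Rightarrow> real \<Rightarrow> 'a) \<Rightarrow> bool" where
  "pos_lin_map k T \<longleftrightarrow>
     (\<forall>f g. Ck k f \<longrightarrow> Ck k g \<longrightarrow> (\<forall>x\<in>unitI. f x = g x) \<longrightarrow> (\<forall>x\<in>unitI. T f x = T g x)) \<and>
     (\<forall>f. Ck k f \<longrightarrow> continuous_on unitI (T f)) \<and>
     (\<forall>f g. Ck k f \<longrightarrow> Ck k g \<longrightarrow> (\<forall>x\<in>unitI. T (\<lambda>t. f t + g t) x = T f x + T g x)) \<and>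
     (\<forall>f c. Ck k f \<longrightarrow> (\<forall>x\<in>unitI. T (\<lambda>t. c * f t) x = c * T f x)) \<and>
     (\<forall>f. Ck k f \<longrightarrow> (\<forall>x\<in>unitI. nonneg_scalar (f x)) \<longrightarrow> (\<forall>x\<in>unitI. nonneg_scalar (T f x)))"

definition test_funs :: "(real \<Rightarrow> 'a::real_normed_field) set" where
  "test_funs = {(\<lambda>t. 1), (\<lambda>t. of_real t), (\<lambda>t. of_real (t ^ 2))}"

end

theory Submission
  imports Defs
begin

text \<open>Korovkin's argument: for a real function \<open>u\<close> of class C^(k) and \<open>\<epsilon> > 0\<close>,
  uniform continuity gives \<open>|u t - u x| \<le> \<epsilon> + c (t - x)\<^sup>2\<close> on \<open>I\<close>.  Applying a positive
  linear map \<open>T\<close> to the two function inequalities this expresses bounds \<open>|T u x - u x|\<close> by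
  \<open>\<epsilon> + K\<close> times the errors of \<open>T\<close> on \<open>1, t, t\<^sup>2\<close> at \<open>x\<close>, with \<open>K\<close> independent of \<open>T\<close> and \<open>x\<close>;
  so convergence on the test functions, pointwise or uniform, carries over to \<open>u\<close>.

  Positivity only constrains real-valued functions, so a scalar-valued \<open>f\<close> is split as
  \<open>f = u\<^sub>1 + j u\<^sub>2\<close> with real \<open>u\<^sub>i\<close> of the same class.  For an arbitrary real normed field of scalars
  this needs the Gelfand--Mazur theorem that the field is \<open>\<real>\<close> or \<open>\<complex>\<close>, proved here by Mazur's
  argument: \<open>|(z - s)\<^sup>2 + t\<^sup>2|\<close> attains its minimum over \<open>(s, t)\<close>, and the minimum is \<open>0\<close>, since
  otherwise factoring \<open>W\<^sup>n - a\<^sup>n\<close> over the \<open>n\<close>-th roots of unity shows that the set of minimisers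
  is invariant under small real translations.\<close>

section \<open>Every real normed field is \<open>\<real>\<close> or \<open>\<complex>\<close>\<close>

lemma norm_prod_list: "norm (prod_list xs) = prod_list (map norm (xs :: 'a::real_normed_div_algebra list))"
  by (induction xs) (auto simp: norm_mult)

lemma prod_list_map_remove1:
  fixes f :: "'b \<Rightarrow> 'a::comm_monoid_mult"
  shows "x \<in> set xs \<Longrightarrow> prod_list (map f xs) = f x * prod_list (map f (remove1 x xs))"
  by (induction xs) (auto simp: mult_ac)

lemma prod_list_ge_power:
  fixes xs :: "'a::linordered_semidom list"
  assumes "\<And>x. x \<in> set xs \<Longrightarrow> m \<le> x" "0 \<le> m"
  shows "m ^ length xs \<le> prod_list xs"
  using assms
proof (induction xs)
  case (Cons x xs)
  then have "m * m ^ length xs \<le> x * prod_list xs"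
    by (intro mult_mono) (auto intro: order_trans[of 0 m])
  then show ?case by simp
qed simp

text \<open>\<open>Cplx x y\<close> stands for \<open>x + i y\<close> in the complexification \<open>'a \<otimes> \<complex>\<close>; \<open>cplx_norm_form\<close> is
  its multiplicative norm \<open>(x + i y)(x - i y)\<close> back into \<open>'a\<close>.\<close>
datatype 'a cplx = Cplx (cplx_re: 'a) (cplx_im: 'a)

instantiation cplx :: (comm_ring_1) comm_ring_1
begin
definition "0 = Cplx 0 0"
definition "1 = Cplx 1 0"
definition "x + y = Cplx (cplx_re x + cplx_re y) (cplx_im x + cplx_im y)"
definition "x - y = Cplx (cplx_re x - cplx_re y) (cplx_im x - cplx_im y)"
definition "- x = Cplx (- cplx_re x) (- cplx_im x)"
definition "x * y = Cplx (cplx_re x * cplx_re y - cplx_im x * cplx_im y)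
                         (cplx_re x * cplx_im y + cplx_im x * cplx_re y)"
instance
  by standard (auto simp: zero_cplx_def one_cplx_def plus_cplx_def minus_cplx_def
      uminus_cplx_def times_cplx_def cplx.expand algebra_simps)
end

definition cplx_of_complex :: "complex \<Rightarrow> 'a::real_normed_field cplx" where
  "cplx_of_complex c = Cplx (of_real (Re c)) (of_real (Im c))"

lemma cplx_of_complex_mult:
  "cplx_of_complex (c * d) = (cplx_of_complex c * cplx_of_complex d :: 'a::real_normed_field cplx)"
  by (simp add: cplx_of_complex_def times_cplx_def)

lemma cplx_of_complex_uminus:
  "cplx_of_complex (- c) = - (cplx_of_complex c :: 'a::real_normed_field cplx)"
  by (simp add: cplx_of_complex_def uminus_cplx_def)

lemma csqrt_power2_cases: "csqrt (c\<^sup>2) = c \<or> csqrt (c\<^sup>2) = - c"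
proof -
  have "(csqrt (c\<^sup>2) - c) * (csqrt (c\<^sup>2) + c) = 0"
    by (simp add: algebra_simps power2_eq_square[symmetric])
  then show ?thesis by (auto simp: eq_neg_iff_add_eq_0)
qed

text \<open>The roots are found by taking square roots \<open>m\<close> times, hence the exponent \<open>2\<^sup>m\<close>.\<close>
lemma cplx_power_diff_factors:
  fixes W :: "'a::real_normed_field cplx"
  shows "\<exists>rs. c \<in> set rs \<and> (\<forall>r\<in>set rs. cmod r = cmod c) \<and> length rs = 2^m \<and>
     prod_list (map (\<lambda>r. W - cplx_of_complex r) rs) = W^(2^m) - cplx_of_complex (c^(2^m))"
proof (induction m arbitrary: W c)
  case 0
  then show ?case by (intro exI[of _ "[c]"]) auto
next
  case (Suc m)
  from Suc.IH[of "c\<^sup>2" "W\<^sup>2"] obtain rs where rs: "c\<^sup>2 \<in> set rs"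
    "\<forall>r\<in>set rs. cmod r = cmod (c\<^sup>2)" "length rs = 2^m"
    "prod_list (map (\<lambda>r. W\<^sup>2 - cplx_of_complex r) rs) = (W\<^sup>2)^(2^m) - cplx_of_complex ((c\<^sup>2)^(2^m))"
    by blast
  define rs' where "rs' = concat (map (\<lambda>r. [csqrt r, - csqrt r]) rs)"
  have "c \<in> set rs'" using rs(1) csqrt_power2_cases[of c] unfolding rs'_def by force
  moreover have "\<forall>r\<in>set rs'. cmod r = cmod c" using rs(2) unfolding rs'_def
    by (auto simp: norm_power real_sqrt_abs)
  moreover have "length rs' = 2^Suc m"
  proof -
    have "length rs' = 2 * length rs" unfolding rs'_def by (induction rs) auto
    then show ?thesis using rs(3) by simp
  qed
  moreover have "prod_list (map (\<lambda>r. W - cplx_of_complex r) rs') = W^(2^Suc m) - cplx_of_complex (c^(2^Suc m))"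
  proof -
    have root_pair: "(W - cplx_of_complex (csqrt r)) * (W - cplx_of_complex (- csqrt r)) = W\<^sup>2 - cplx_of_complex r" for r
      using cplx_of_complex_mult[of "csqrt r" "csqrt r", where 'a='a]
      by (simp add: cplx_of_complex_uminus algebra_simps power2_eq_square[symmetric])
    have "prod_list (map (\<lambda>r. W - cplx_of_complex r) rs') = prod_list (map (\<lambda>r. W\<^sup>2 - cplx_of_complex r) rs)"
      unfolding rs'_def by (induction rs) (auto simp: root_pair[symmetric] mult.assoc)
    then show ?thesis using rs(4) by (simp add: power_mult[symmetric] mult.commute)
  qed
  ultimately show ?case by blast
qed

definition cplx_norm_form :: "'a::comm_ring_1 cplx \<Rightarrow> 'a" where
  "cplx_norm_form w = cplx_re w ^ 2 + cplx_im w ^ 2"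

lemma cplx_norm_form_mult: "cplx_norm_form (x * y) = cplx_norm_form x * cplx_norm_form y"
  by (simp add: cplx_norm_form_def times_cplx_def power2_eq_square algebra_simps)

lemma cplx_norm_form_one [simp]: "cplx_norm_form 1 = 1"
  by (simp add: cplx_norm_form_def one_cplx_def)

lemma cplx_norm_form_prod_list: "cplx_norm_form (prod_list xs) = prod_list (map cplx_norm_form xs)"
  by (induction xs) (auto simp: cplx_norm_form_mult)

lemma cplx_norm_form_power: "cplx_norm_form (x ^ n) = cplx_norm_form x ^ n"
  by (induction n) (auto simp: cplx_norm_form_mult)

definition cplx_l1 :: "'a::real_normed_field cplx \<Rightarrow> real" where
  "cplx_l1 w = norm (cplx_re w) + norm (cplx_im w)"

lemma cplx_l1_mult: "cplx_l1 (x * y) \<le> cplx_l1 x * cplx_l1 y"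
proof -
  have "norm (cplx_re (x * y)) \<le> norm (cplx_re x) * norm (cplx_re y) + norm (cplx_im x) * norm (cplx_im y)"
    using norm_triangle_ineq4[of "cplx_re x * cplx_re y" "cplx_im x * cplx_im y"]
    by (simp add: times_cplx_def norm_mult)
  moreover have "norm (cplx_im (x * y)) \<le> norm (cplx_re x) * norm (cplx_im y) + norm (cplx_im x) * norm (cplx_re y)"
    using norm_triangle_ineq[of "cplx_re x * cplx_im y" "cplx_im x * cplx_re y"]
    by (simp add: times_cplx_def norm_mult)
  ultimately show ?thesis by (simp add: cplx_l1_def algebra_simps)
qed

lemma cplx_l1_power: "cplx_l1 (x ^ n) \<le> cplx_l1 x ^ n"
proof (induction n)
  case 0
  then show ?case by (simp add: cplx_l1_def one_cplx_def)
next
  case (Suc n)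
  have "cplx_l1 (x ^ Suc n) \<le> cplx_l1 x * cplx_l1 (x ^ n)" by (simp add: cplx_l1_mult)
  also have "\<dots> \<le> cplx_l1 x * cplx_l1 x ^ n"
    using Suc by (intro mult_left_mono) (auto simp: cplx_l1_def)
  finally show ?case by simp
qed

lemma cplx_norm_form_diff_real_le:
  fixes V :: "'a::real_normed_field cplx"
  shows "norm (cplx_norm_form (V - cplx_of_complex (of_real b)))
           \<le> norm (cplx_norm_form V) + 2 * \<bar>b\<bar> * cplx_l1 V + b\<^sup>2"
proof -
  have "cplx_norm_form (V - cplx_of_complex (of_real b))
      = cplx_norm_form V - 2 * of_real b * cplx_re V + of_real (b\<^sup>2)"
    by (simp add: cplx_norm_form_def cplx_of_complex_def minus_cplx_def power2_eq_square algebra_simps)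
  also have "norm \<dots> \<le> norm (cplx_norm_form V) + norm (2 * of_real b * cplx_re V) + norm (of_real (b\<^sup>2) :: 'a)"
    by (rule order_trans[OF norm_triangle_ineq add_right_mono[OF norm_triangle_ineq4]])
  also have "norm (2 * of_real b * cplx_re V) \<le> 2 * \<bar>b\<bar> * cplx_l1 V"
    by (simp add: norm_mult cplx_l1_def mult_left_mono)
  finally show ?thesis by (simp add: norm_power)
qed

text \<open>Mazur's estimate: the norm form of \<open>W\<^sup>n - a\<^sup>n\<close> is the product of those of the factors
  \<open>W - r\<close>, all but one of which are at least \<open>m\<close>; compare with its direct expansion.\<close>
lemma cplx_norm_form_root_estimate:
  fixes W :: "'a::real_normed_field cplx"
  assumes min: "\<And>r. m \<le> norm (cplx_norm_form (W - cplx_of_complex r))"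
    and nW: "norm (cplx_norm_form W) = m" and a: "0 \<le> a"
  shows "norm (cplx_norm_form (W - cplx_of_complex (of_real a))) * m ^ (2^j - 1)
           \<le> m ^ 2^j + 2 * (a * cplx_l1 W) ^ 2^j + (a\<^sup>2) ^ 2^j"
proof -
  define N :: nat where "N = 2^j"
  define g where "g = (\<lambda>r. norm (cplx_norm_form (W - cplx_of_complex r)))"
  obtain rs where rs: "of_real a \<in> set rs" "length rs = N"
    "prod_list (map (\<lambda>r. W - cplx_of_complex r) rs) = W^N - cplx_of_complex (of_real a ^ N)"
    using cplx_power_diff_factors[where c="of_real a" and W=W and m=j] unfolding N_def by blast
  have "m ^ length (map g (remove1 (of_real a) rs)) \<le> prod_list (map g (remove1 (of_real a) rs))"
    by (rule prod_list_ge_power) (use min nW in \<open>auto simp: g_def\<close>)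
  then have "m ^ (N - 1) \<le> prod_list (map g (remove1 (of_real a) rs))"
    using rs(1,2) by (simp add: length_remove1)
  then have "g (of_real a) * m ^ (N - 1) \<le> g (of_real a) * prod_list (map g (remove1 (of_real a) rs))"
    by (simp add: g_def mult_left_mono)
  also have "\<dots> = prod_list (map g rs)"
    using rs(1) by (rule prod_list_map_remove1[symmetric])
  also have "\<dots> = norm (cplx_norm_form (prod_list (map (\<lambda>r. W - cplx_of_complex r) rs)))"
    by (simp add: cplx_norm_form_prod_list norm_prod_list g_def o_def)
  also have "\<dots> = norm (cplx_norm_form (W^N - cplx_of_complex (of_real (a ^ N))))"
    using rs(3) by simp
  also have "\<dots> \<le> norm (cplx_norm_form (W^N)) + 2 * \<bar>a ^ N\<bar> * cplx_l1 (W^N) + (a ^ N)\<^sup>2"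
    by (rule cplx_norm_form_diff_real_le)
  also have "\<dots> \<le> m ^ N + 2 * (a * cplx_l1 W) ^ N + (a\<^sup>2) ^ N"
  proof -
    have "norm (cplx_norm_form (W^N)) = m ^ N"
      by (simp add: cplx_norm_form_power norm_power nW)
    moreover have "\<bar>a ^ N\<bar> * cplx_l1 (W^N) \<le> (a * cplx_l1 W) ^ N"
      using a cplx_l1_power[of W N] by (simp add: power_mult_distrib mult_left_mono)
    moreover have "(a ^ N)\<^sup>2 = (a\<^sup>2) ^ N"
      by (metis power_mult mult.commute)
    ultimately show ?thesis by simp
  qed
  finally show ?thesis by (simp add: g_def N_def)
qed

lemma cplx_norm_form_min_shift:
  fixes W :: "'a::real_normed_field cplx"
  assumes min: "\<And>r. m \<le> norm (cplx_norm_form (W - cplx_of_complex r))"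
    and nW: "norm (cplx_norm_form W) = m" and m: "0 < m"
    and a: "0 < a" "a * cplx_l1 W < m" "a\<^sup>2 < m"
  shows "norm (cplx_norm_form (W - cplx_of_complex (of_real a))) \<le> m"
proof -
  define x where "x = norm (cplx_norm_form (W - cplx_of_complex (of_real a)))"
  define q1 where "q1 = a * cplx_l1 W / m"
  define q2 where "q2 = a\<^sup>2 / m"
  have q: "0 \<le> q1" "q1 < 1" "0 \<le> q2" "q2 < 1"
    using a m by (auto simp: q1_def q2_def cplx_l1_def)
  have bound: "x \<le> m + 2 * m * q1 ^ 2^j + m * q2 ^ 2^j" for j
  proof -
    define N :: nat where "N = 2^j"
    have "0 < N" by (simp add: N_def)
    then have mN: "m ^ N = m * m ^ (N - 1)"
      using power_Suc[of m "N - 1"] by simp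
    have "x * m ^ (N - 1) \<le> m ^ N + 2 * (m * q1) ^ N + (m * q2) ^ N"
      using cplx_norm_form_root_estimate[OF min nW, of a j] a m
      by (simp add: x_def q1_def q2_def N_def)
    also have "\<dots> = (m + 2 * m * q1 ^ N + m * q2 ^ N) * m ^ (N - 1)"
      by (simp add: power_mult_distrib mN algebra_simps)
    finally show ?thesis
      using m by (simp add: N_def)
  qed
  have "strict_mono (\<lambda>j::nat. (2::nat) ^ j)"
    by (simp add: strict_mono_def)
  then have "(\<lambda>j. m + 2 * m * q1 ^ 2^j + m * q2 ^ 2^j) \<longlonglongrightarrow> m + 2 * m * 0 + m * 0"
    using q by (intro tendsto_intros LIMSEQ_subseq_LIMSEQ[OF LIMSEQ_power_zero, unfolded o_def]) auto
  then show ?thesis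
    using bound unfolding x_def by (simp add: LIMSEQ_le_const)
qed

definition quad_defect :: "'a::real_normed_field \<Rightarrow> complex \<Rightarrow> real" where
  "quad_defect z w = norm ((z - of_real (Re w))\<^sup>2 + of_real (Im w) ^ 2)"

lemma quad_defect_add:
  "quad_defect z (w + r) = norm (cplx_norm_form (Cplx z 0 - cplx_of_complex w - cplx_of_complex r))"
  by (simp add: quad_defect_def cplx_norm_form_def cplx_of_complex_def minus_cplx_def
      power2_eq_square algebra_simps)

lemma continuous_on_quad_defect: "continuous_on A (quad_defect z)"
  unfolding quad_defect_def by (intro continuous_intros)

lemma quad_defect_lower_bound: "cmod w ^ 2 - 2 * cmod w * norm z - norm z ^ 2 \<le> quad_defect z w"
proof -
  have "(z - of_real (Re w))\<^sup>2 + of_real (Im w) ^ 2 = of_real (Re w ^ 2 + Im w ^ 2) - (2 * of_real (Re w) * z - z\<^sup>2)"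
    by (simp add: power2_eq_square algebra_simps)
  then have "(z - of_real (Re w))\<^sup>2 + of_real (Im w) ^ 2 = of_real ((cmod w)\<^sup>2) - (2 * of_real (Re w) * z - z\<^sup>2)"
    by (simp only: cmod_power2)
  moreover have "norm (2 * of_real (Re w) * z - z\<^sup>2) \<le> 2 * cmod w * norm z + norm z ^ 2"
    using norm_triangle_ineq4[of "2 * of_real (Re w) * z" "z\<^sup>2"]
      mult_right_mono[OF abs_Re_le_cmod[of w] norm_ge_zero[of z]]
    by (simp add: norm_mult norm_power)
  ultimately show ?thesis
    using norm_triangle_ineq2[of "of_real ((cmod w)\<^sup>2) :: 'a" "2 * of_real (Re w) * z - z\<^sup>2"]
    unfolding quad_defect_def norm_of_real by simp
qed

lemma compact_quad_defect_sublevel: "compact {w. quad_defect z w \<le> R}"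
proof (rule compact_eq_bounded_closed[THEN iffD2], rule conjI)
  have "cmod w \<le> sqrt (2 * R + 6 * norm z ^ 2)" if "quad_defect z w \<le> R" for w
  proof -
    have "2 * cmod w * norm z \<le> (cmod w)\<^sup>2 / 2 + 2 * norm z ^ 2"
      using sum_squares_ge_zero[of "cmod w - 2 * norm z" 0] by (simp add: power2_eq_square algebra_simps)
    then have "(cmod w)\<^sup>2 \<le> 2 * R + 6 * norm z ^ 2"
      using quad_defect_lower_bound[of w z] that by linarith
    then show ?thesis by (simp add: real_le_rsqrt)
  qed
  then show "bounded {w. quad_defect z w \<le> R}"
    unfolding bounded_iff by blast
  show "closed {w. quad_defect z w \<le> R}"
    by (intro closed_Collect_le continuous_on_quad_defect continuous_on_const)
qed

lemma quad_defect_rightmost_minimizer: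
  obtains w0 where "\<And>w. quad_defect z w0 \<le> quad_defect z w"
    and "\<And>w. quad_defect z w = quad_defect z w0 \<Longrightarrow> Re w \<le> Re w0"
proof -
  define K where "K = {w. quad_defect z w \<le> quad_defect z 0}"
  have "compact K"
    unfolding K_def by (rule compact_quad_defect_sublevel)
  moreover have "K \<noteq> {}"
    by (auto simp: K_def)
  ultimately obtain w1 where w1: "w1 \<in> K" "\<And>w. w \<in> K \<Longrightarrow> quad_defect z w1 \<le> quad_defect z w"
    using continuous_attains_inf[OF _ _ continuous_on_quad_defect] by metis
  have min: "quad_defect z w1 \<le> quad_defect z w" for w
  proof (cases "w \<in> K")
    case False
    then show ?thesis
      using w1(2)[of 0] by (simp add: K_def)
  qed (rule w1(2))
  define S where "S = {w. quad_defect z w \<le> quad_defect z w1}"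
  have "compact S"
    unfolding S_def by (rule compact_quad_defect_sublevel)
  moreover have "S \<noteq> {}"
    by (auto simp: S_def)
  moreover have "continuous_on S Re"
    by (intro continuous_intros)
  ultimately obtain w0 where w0: "w0 \<in> S" "\<And>w. w \<in> S \<Longrightarrow> Re w \<le> Re w0"
    using continuous_attains_sup by metis
  show ?thesis
  proof (rule that)
    show "quad_defect z w0 \<le> quad_defect z w" for w
      using w0(1) min[of w0] min[of w] by (simp add: S_def)
    show "Re w \<le> Re w0" if "quad_defect z w = quad_defect z w0" for w
      using w0 that min[of w0] by (simp add: S_def)
  qed
qed

lemma ex_pos_mult_square_less:
  fixes m C :: real
  assumes m: "0 < m" and C: "0 \<le> C"
  obtains a where "0 < a" "a * C < m" "a\<^sup>2 < m"
proof -
  define a where "a = min 1 (m / (2 * (C + 1)))"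
  have a: "0 < a" "a \<le> 1" "a \<le> m / (2 * (C + 1))"
    using m C by (auto simp: a_def)
  have "a * C \<le> m / (2 * (C + 1)) * C"
    using a(3) C by (rule mult_right_mono)
  also have "\<dots> < m"
    using m C by (simp add: field_simps add_nonneg_pos)
  finally have "a * C < m" .
  moreover have "a\<^sup>2 \<le> a"
    using a(1,2) by (simp add: power2_eq_square mult_le_cancel_left1)
  moreover have "m / (2 * (C + 1)) \<le> m / 2"
    using m C by (intro divide_left_mono) auto
  ultimately show ?thesis
    using that[of a] a m by linarith
qed

text \<open>At a minimiser of \<open>quad_defect z\<close> with largest real part the defect vanishes: otherwise
  \<open>cplx_norm_form_min_shift\<close> yields a minimiser further to the right.\<close>
lemma ex_real_quadratic_root:
  fixes z :: "'a::real_normed_field"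
  obtains s t :: real where "(z - of_real s)\<^sup>2 + of_real t ^ 2 = 0"
proof -
  obtain w0 where min: "\<And>w. quad_defect z w0 \<le> quad_defect z w"
    and rightmost: "\<And>w. quad_defect z w = quad_defect z w0 \<Longrightarrow> Re w \<le> Re w0"
    using quad_defect_rightmost_minimizer by blast
  define W :: "'a cplx" where "W = Cplx z 0 - cplx_of_complex w0"
  define m where "m = quad_defect z w0"
  have shift: "quad_defect z (w0 + r) = norm (cplx_norm_form (W - cplx_of_complex r))" for r
    by (simp add: W_def quad_defect_add)
  have minW: "m \<le> norm (cplx_norm_form (W - cplx_of_complex r))" for r
    using min[of "w0 + r"] by (simp add: m_def shift)
  have nW: "norm (cplx_norm_form W) = m"
    using shift[of 0] by (simp add: m_def cplx_of_complex_def zero_cplx_def[symmetric])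
  have "m = 0"
  proof (rule ccontr)
    assume "m \<noteq> 0"
    then have m: "0 < m"
      by (simp add: m_def quad_defect_def)
    obtain a where a: "0 < a" "a * cplx_l1 W < m" "a\<^sup>2 < m"
      using ex_pos_mult_square_less[OF m, of "cplx_l1 W"] by (auto simp: cplx_l1_def)
    have "quad_defect z (w0 + of_real a) \<le> m"
      unfolding shift by (rule cplx_norm_form_min_shift[OF minW nW m a])
    then have "Re (w0 + of_real a) \<le> Re w0"
      using min[of "w0 + of_real a"] by (intro rightmost) (simp add: m_def)
    then show False
      using a(1) by simp
  qed
  then show ?thesis
    using that[of "Re w0" "Im w0"] by (simp add: m_def quad_defect_def)
qed

definition embed_complex :: "'a::real_normed_field \<Rightarrow> complex \<Rightarrow> 'a" where
  "embed_complex j w = of_real (Re w) + of_real (Im w) * j"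

lemma embed_complex_add: "embed_complex j (v + w) = embed_complex j v + embed_complex j w"
  by (simp add: embed_complex_def algebra_simps)

lemma embed_complex_scaleR: "embed_complex j (r *\<^sub>R w) = r *\<^sub>R embed_complex j w"
  by (simp add: embed_complex_def scaleR_conv_of_real algebra_simps)

lemma embed_complex_mult:
  assumes "j * j = -1"
  shows "embed_complex j (v * w) = embed_complex j v * embed_complex j w"
proof -
  have "embed_complex j v * embed_complex j w
      = of_real (Re v * Re w) + of_real (Re v * Im w + Im v * Re w) * j + of_real (Im v * Im w) * (j * j)"
    by (simp add: embed_complex_def algebra_simps)
  then show ?thesis
    using assms by (simp add: embed_complex_def algebra_simps)
qed

lemma embed_complex_power:
  assumes "j * j = -1"
  shows "embed_complex j (w ^ n) = embed_complex j w ^ n"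
  by (induction n) (simp add: embed_complex_def, simp add: embed_complex_mult[OF assms])

text \<open>On the unit circle the values \<open>norm (embed_complex j u)\<close> form a bounded multiplicative group
  of positive reals, which can only be \<open>{1}\<close>.\<close>
lemma norm_embed_complex_unit:
  assumes j: "j * j = -1" and u: "cmod u = 1"
  shows "norm (embed_complex j u) = 1"
proof -
  have "norm j ^ 2 = 1"
    using arg_cong[OF j, of norm] by (simp add: norm_mult power2_eq_square)
  then have "norm j = 1"
    using norm_ge_zero[of j] by (auto simp: power2_eq_1_iff)
  then have bound: "norm (embed_complex j v) \<le> 2" if "cmod v = 1" for v
    using norm_triangle_ineq[of "of_real (Re v) :: 'a" "of_real (Im v) * j"]
      abs_Re_le_cmod[of v] abs_Im_le_cmod[of v] that
    by (simp add: embed_complex_def norm_mult)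
  have le1: "norm (embed_complex j v) \<le> 1" if "cmod v = 1" for v
  proof (rule ccontr)
    assume "\<not> ?thesis"
    then obtain n where "2 < norm (embed_complex j v) ^ n"
      using real_arch_pow by fastforce
    moreover have "norm (embed_complex j v) ^ n \<le> 2"
      using bound[of "v ^ n"] that by (simp add: embed_complex_power[OF j] norm_power)
    ultimately show False by simp
  qed
  have "u * cnj u = 1"
    using u complex_norm_square[of u] by simp
  then have "embed_complex j u * embed_complex j (cnj u) = 1"
    by (simp add: embed_complex_mult[OF j, symmetric]) (simp add: embed_complex_def)
  then have "norm (embed_complex j u) * norm (embed_complex j (cnj u)) = 1"
    by (metis norm_mult norm_one)
  moreover have "norm (embed_complex j (cnj u)) \<le> 1"
    using le1[of "cnj u"] u by simp
  ultimately show ?thesis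
    using le1[OF u] by (metis antisym mult_left_le norm_ge_zero)
qed

lemma norm_embed_complex:
  assumes j: "j * j = -1"
  shows "norm (embed_complex j w) = cmod w"
proof (cases "w = 0")
  case False
  then have "w = of_real (cmod w) * (w / of_real (cmod w))"
    by simp
  then have "embed_complex j w = of_real (cmod w) * embed_complex j (w / of_real (cmod w))"
    by (metis embed_complex_scaleR scaleR_conv_of_real)
  then show ?thesis
    using norm_embed_complex_unit[OF j, of "w / of_real (cmod w)"] False by (simp add: norm_mult norm_divide)
qed (simp add: embed_complex_def)

lemma embed_complex_surj:
  assumes j: "j * j = -1"
  obtains w where "embed_complex j w = z"
proof -
  obtain s t where st: "(z - of_real s)\<^sup>2 + of_real t ^ 2 = 0"
    by (rule ex_real_quadratic_root[of z])
  have "(z - embed_complex j (Complex s t)) * (z - embed_complex j (Complex s (- t)))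
      = (z - of_real s)\<^sup>2 - of_real t ^ 2 * (j * j)"
    by (simp add: embed_complex_def power2_eq_square algebra_simps)
  also have "\<dots> = 0"
    using st j by simp
  finally show ?thesis
    using that by auto
qed

lemma bounded_linear_inv_embed_complex:
  assumes j: "j * j = -1"
  shows "bounded_linear (inv (embed_complex j))"
proof -
  have embed_inv: "embed_complex j (inv (embed_complex j) z) = z" for z
    using embed_complex_surj[OF j] by (metis f_inv_into_f rangeI)
  have inj: "v = w" if "embed_complex j v = embed_complex j w" for v w
  proof -
    have "embed_complex j (v - w) = 0"
      using that embed_complex_add[of j "v - w" w] by simp
    then show ?thesis
      using norm_embed_complex[OF j, of "v - w"] by simp
  qed
  show ?thesis
  proof (rule bounded_linear_intro)
    show "inv (embed_complex j) (z + z') = inv (embed_complex j) z + inv (embed_complex j) z'" for z z'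
      by (rule inj) (simp add: embed_inv embed_complex_add)
    show "inv (embed_complex j) (r *\<^sub>R z) = r *\<^sub>R inv (embed_complex j) z" for r z
      by (rule inj) (simp add: embed_inv embed_complex_scaleR)
    show "norm (inv (embed_complex j) z) \<le> norm z * 1" for z
      using norm_embed_complex[OF j, of "inv (embed_complex j) z"] by (simp add: embed_inv)
  qed
qed

lemma of_real_surj_without_sqrt_minus_one:
  fixes z :: "'a::real_normed_field"
  assumes nj: "\<nexists>j::'a. j * j = -1"
  obtains s where "z = of_real s"
proof -
  obtain s t where st: "(z - of_real s)\<^sup>2 + of_real t ^ 2 = 0"
    by (rule ex_real_quadratic_root[of z])
  have "t = 0"
  proof (rule ccontr)
    assume "t \<noteq> 0"
    then have "((z - of_real s) / of_real t) * ((z - of_real s) / of_real t) = -1"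
      using st by (simp add: power2_eq_square field_simps add_eq_0_iff)
    with nj show False by blast
  qed
  with st show ?thesis
    using that by simp
qed

lemma bounded_linear_inv_of_real:
  assumes "\<nexists>j::'a::real_normed_field. j * j = -1"
  shows "bounded_linear (inv (of_real :: real \<Rightarrow> 'a))"
proof -
  have of_real_inv: "of_real (inv (of_real :: real \<Rightarrow> 'a) z) = z" for z
    using of_real_surj_without_sqrt_minus_one[OF assms] by (metis f_inv_into_f rangeI)
  show ?thesis
  proof (rule bounded_linear_intro)
    show "inv of_real (z + z') = inv of_real z + inv (of_real :: real \<Rightarrow> 'a) z'" for z z'
      by (rule of_real_eq_iff[where 'a='a, THEN iffD1]) (simp add: of_real_inv)
    show "inv of_real (r *\<^sub>R z) = r *\<^sub>R inv (of_real :: real \<Rightarrow> 'a) z" for r z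
      by (rule of_real_eq_iff[where 'a='a, THEN iffD1]) (simp add: of_real_inv scaleR_conv_of_real)
    show "norm (inv (of_real :: real \<Rightarrow> 'a) z) \<le> norm z * 1" for z
      using norm_of_real[of "inv (of_real :: real \<Rightarrow> 'a) z", where 'a='a] by (simp add: of_real_inv)
  qed
qed

text \<open>If \<open>-1\<close> has no square root in \<open>'a\<close>, then \<open>'a = \<real>\<close> and \<open>j = 0\<close>.\<close>
lemma real_normed_field_coordinates:
  obtains j :: "'a::real_normed_field" and re im :: "'a \<Rightarrow> real"
  where "bounded_linear re" "bounded_linear im" "\<And>z. z = of_real (re z) + of_real (im z) * j"
proof (cases "\<exists>j::'a. j * j = -1")
  case True
  then obtain j :: 'a where j: "j * j = -1" by blast
  let ?c = "inv (embed_complex j)"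
  have "z = of_real (Re (?c z)) + of_real (Im (?c z)) * j" for z
    using embed_complex_surj[OF j] by (metis embed_complex_def f_inv_into_f rangeI)
  then show ?thesis
    using bounded_linear_inv_embed_complex[OF j]
    by (intro that[of "\<lambda>z. Re (?c z)" "\<lambda>z. Im (?c z)" j])
      (auto intro: bounded_linear_compose[OF bounded_linear_Re] bounded_linear_compose[OF bounded_linear_Im])
next
  case False
  let ?r = "inv (of_real :: real \<Rightarrow> 'a)"
  have "z = of_real (?r z)" for z
    using of_real_surj_without_sqrt_minus_one[OF False] by (metis f_inv_into_f rangeI)
  then show ?thesis
    using bounded_linear_inv_of_real[OF False]
    by (intro that[of ?r "\<lambda>z. 0" 0]) (auto intro: bounded_linear_zero)
qed

section \<open>Functions of class C^(k)\<close>

lemma Ck_continuous_on: "Ck k f \<Longrightarrow> continuous_on unitI f"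
  unfolding Ck_def by (metis zero_enat_def zero_le)

lemma Ck_add:
  assumes "Ck k f" "Ck k g"
  shows "Ck k (\<lambda>t. f t + g t)"
proof -
  obtain D where "D 0 = f"
    "\<forall>j. enat j < k \<longrightarrow> (\<forall>x\<in>unitI. (D j has_vector_derivative D (Suc j) x) (at x within unitI))"
    "\<forall>j. enat j \<le> k \<longrightarrow> continuous_on unitI (D j)"
    using assms(1) unfolding Ck_def by blast
  moreover obtain E where "E 0 = g"
    "\<forall>j. enat j < k \<longrightarrow> (\<forall>x\<in>unitI. (E j has_vector_derivative E (Suc j) x) (at x within unitI))"
    "\<forall>j. enat j \<le> k \<longrightarrow> continuous_on unitI (E j)"
    using assms(2) unfolding Ck_def by blast
  ultimately show ?thesis
    unfolding Ck_def
    by (intro exI[of _ "\<lambda>j x. D j x + E j x"]) (auto intro!: has_vector_derivative_add continuous_on_add)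
qed

lemma Ck_bounded_linear:
  assumes "bounded_linear \<phi>" "Ck k f"
  shows "Ck k (\<lambda>t. \<phi> (f t))"
proof -
  obtain D where "D 0 = f"
    "\<forall>j. enat j < k \<longrightarrow> (\<forall>x\<in>unitI. (D j has_vector_derivative D (Suc j) x) (at x within unitI))"
    "\<forall>j. enat j \<le> k \<longrightarrow> continuous_on unitI (D j)"
    using assms(2) unfolding Ck_def by blast
  then show ?thesis
    unfolding Ck_def
    by (intro exI[of _ "\<lambda>j x. \<phi> (D j x)"])
      (auto intro!: bounded_linear.has_vector_derivative[OF assms(1)]
        bounded_linear.continuous_on[OF assms(1)])
qed

lemma Ck_mult_left:
  fixes f :: "real \<Rightarrow> 'a::real_normed_algebra"
  shows "Ck k f \<Longrightarrow> Ck k (\<lambda>t. c * f t)"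
  by (rule Ck_bounded_linear[OF bounded_linear_mult_right])

lemma Ck_of_real:
  "Ck k u \<Longrightarrow> Ck k (\<lambda>t. of_real (u t) :: 'a::real_normed_algebra_1)"
  by (rule Ck_bounded_linear[OF bounded_linear_of_real])

lemma Ck_smooth:
  assumes "D 0 = f" "\<And>j x. (D j has_vector_derivative D (Suc j) x) (at x)"
  shows "Ck k f"
proof -
  have "(D j has_vector_derivative D (Suc j) x) (at x within unitI)" for j x
    using assms(2) by (rule has_vector_derivative_at_within)
  moreover from this have "continuous_on unitI (D j)" for j
    by (intro continuous_on_vector_derivative) auto
  ultimately show ?thesis
    using assms(1) unfolding Ck_def by blast
qed

lemma Ck_const: "Ck k (\<lambda>t. c)"
  by (rule Ck_smooth[of "\<lambda>j t. if j = 0 then c else 0"]) auto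

lemma Ck_id: "Ck k (\<lambda>t. t)"
  by (rule Ck_smooth[of "\<lambda>j t. if j = 0 then t else if j = 1 then 1 else 0"])
    (auto simp: has_real_derivative_iff_has_vector_derivative[symmetric])

lemma Ck_power2: "Ck k (\<lambda>t. t\<^sup>2)"
proof (rule Ck_smooth[of "\<lambda>j t. if j = 0 then t\<^sup>2 else if j = 1 then 2 * t else if j = 2 then 2 else 0"])
  fix j and x :: real
  have "((\<lambda>t. t\<^sup>2) has_real_derivative 2 * x) (at x)" "((\<lambda>t. 2 * t) has_real_derivative 2) (at x)"
    by (auto intro!: derivative_eq_intros)
  then show "((\<lambda>t. if j = 0 then t\<^sup>2 else if j = 1 then 2 * t else if j = 2 then 2 else 0)
      has_vector_derivative (if Suc j = 0 then x\<^sup>2 else if Suc j = 1 then 2 * x else if Suc j = 2 then 2 else 0)) (at x)"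
    by (auto simp: has_real_derivative_iff_has_vector_derivative[symmetric] numeral_2_eq_2)
qed simp

lemma Ck_real_coordinates:
  fixes f :: "real \<Rightarrow> 'a::real_normed_field"
  assumes f: "Ck k f"
  obtains j :: 'a and u1 u2 :: "real \<Rightarrow> real"
  where "Ck k u1" "Ck k u2" "f = (\<lambda>t. of_real (u1 t) + j * of_real (u2 t))"
proof -
  obtain re im and j :: 'a where re: "bounded_linear re" and im: "bounded_linear im"
    and coords: "\<And>z. z = of_real (re z) + of_real (im z) * j"
    using real_normed_field_coordinates[where 'a='a] by metis
  have "f = (\<lambda>t. of_real (re (f t)) + j * of_real (im (f t)))"
    by (rule ext) (metis coords mult.commute)
  then show ?thesis
    using that Ck_bounded_linear[OF re f] Ck_bounded_linear[OF im f] by blast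
qed

lemma Ck_quadratic: "Ck k (\<lambda>t. \<alpha> + \<beta> * t + \<gamma> * t\<^sup>2)"
  by (intro Ck_add Ck_const Ck_mult_left Ck_id Ck_power2)

section \<open>Korovkin's estimate\<close>

lemma nonneg_scalar_of_real: "0 \<le> r \<Longrightarrow> nonneg_scalar (of_real r)"
  unfolding nonneg_scalar_def by blast

context
  fixes T :: "(real \<Rightarrow> 'a::real_normed_field) \<Rightarrow> real \<Rightarrow> 'a" and k x
  assumes T: "pos_lin_map k T" and x: "x \<in> unitI"
begin

lemma pos_lin_map_add: "Ck k f \<Longrightarrow> Ck k g \<Longrightarrow> T (\<lambda>t. f t + g t) x = T f x + T g x"
  using T x unfolding pos_lin_map_def by blast

lemma pos_lin_map_mult: "Ck k f \<Longrightarrow> T (\<lambda>t. c * f t) x = c * T f x"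
  using T x unfolding pos_lin_map_def by blast

lemma pos_lin_map_nonneg: "Ck k f \<Longrightarrow> (\<forall>t\<in>unitI. nonneg_scalar (f t)) \<Longrightarrow> nonneg_scalar (T f x)"
  using T x unfolding pos_lin_map_def by blast

lemma pos_lin_map_of_real_lincomb:
  assumes "Ck k u" "Ck k v"
  shows "T (\<lambda>t. of_real (c * u t + v t)) x = of_real c * T (\<lambda>t. of_real (u t)) x + T (\<lambda>t. of_real (v t)) x"
proof -
  have "T (\<lambda>t. of_real (c * u t + v t)) x = T (\<lambda>t. of_real c * of_real (u t) + of_real (v t)) x"
    by simp
  also have "\<dots> = of_real c * T (\<lambda>t. of_real (u t)) x + T (\<lambda>t. of_real (v t)) x"
    using assms by (simp add: pos_lin_map_add pos_lin_map_mult Ck_mult_left Ck_of_real)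
  finally show ?thesis .
qed

lemma pos_lin_map_of_real_mono:
  assumes u: "Ck k u" and v: "Ck k v" and le: "\<forall>t\<in>unitI. u t \<le> v t"
    and a: "T (\<lambda>t. of_real (u t)) x = of_real a" and b: "T (\<lambda>t. of_real (v t)) x = of_real b"
  shows "a \<le> b"
proof -
  have "nonneg_scalar (T (\<lambda>t. of_real (- 1 * u t + v t)) x)"
    using le by (intro pos_lin_map_nonneg Ck_of_real Ck_add Ck_mult_left u v ballI nonneg_scalar_of_real)
      auto
  then obtain r where "0 \<le> r" and r: "T (\<lambda>t. of_real (- 1 * u t + v t)) x = of_real r"
    unfolding nonneg_scalar_def by blast
  have "of_real (- 1) * of_real a + of_real b = (of_real r :: 'a)"
    using r unfolding pos_lin_map_of_real_lincomb[OF u v] a b .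
  then have "of_real (b - a) = (of_real r :: 'a)"
    by simp
  with \<open>0 \<le> r\<close> show ?thesis
    by (simp only: of_real_eq_iff)
qed

lemma pos_lin_map_of_real:
  assumes u: "Ck k u"
  obtains r where "T (\<lambda>t. of_real (u t)) x = of_real r"
proof -
  obtain M where M: "\<forall>t\<in>unitI. \<bar>u t\<bar> \<le> M"
    using compact_imp_bounded[OF compact_continuous_image[OF Ck_continuous_on[OF u] compact_Icc]]
    by (force simp: bounded_iff)
  have "0 \<le> 1 * u t + M" if "t \<in> unitI" for t
    using M that by fastforce
  then have "nonneg_scalar (T (\<lambda>t. of_real (1 * u t + M)) x)"
    by (intro pos_lin_map_nonneg Ck_of_real Ck_add Ck_mult_left u Ck_const ballI nonneg_scalar_of_real)
  then obtain r1 where r1: "T (\<lambda>t. of_real (1 * u t + M)) x = of_real r1"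
    unfolding nonneg_scalar_def by blast
  have "nonneg_scalar (T (\<lambda>t. of_real 1) x)"
    by (intro pos_lin_map_nonneg Ck_of_real Ck_const ballI nonneg_scalar_of_real) simp
  then obtain r2 where r2: "T (\<lambda>t. of_real 1) x = of_real r2"
    unfolding nonneg_scalar_def by blast
  have "T (\<lambda>t. of_real (M * 1 + 0)) x = of_real M * of_real r2 + T (\<lambda>t. of_real 0) x"
    using pos_lin_map_of_real_lincomb[OF Ck_const Ck_const, of M 1 0] r2 by simp
  moreover have "T (\<lambda>t. of_real 0) x = 0"
    using pos_lin_map_mult[OF Ck_const, of 0 "of_real 0"] by simp
  ultimately have "T (\<lambda>t. of_real M) x = of_real (M * r2)"
    by simp
  then have "T (\<lambda>t. of_real (u t)) x = of_real (r1 - M * r2)"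
    using pos_lin_map_of_real_lincomb[OF u Ck_const, of 1 M] r1 by (simp add: eq_diff_eq)
  then show ?thesis
    by (rule that)
qed

lemma pos_lin_map_quadratic:
  assumes a0: "T (\<lambda>t. 1) x = of_real a0" and a1: "T (\<lambda>t. of_real t) x = of_real a1"
    and a2: "T (\<lambda>t. of_real (t\<^sup>2)) x = of_real a2"
  shows "T (\<lambda>t. of_real (\<alpha> + \<beta> * t + \<gamma> * t\<^sup>2)) x = of_real (\<alpha> * a0 + \<beta> * a1 + \<gamma> * a2)"
proof -
  have Ck: "Ck k (\<lambda>t. 1 :: 'a)" "Ck k (\<lambda>t. of_real t :: 'a)" "Ck k (\<lambda>t. of_real (t\<^sup>2) :: 'a)"
    by (rule Ck_const Ck_of_real[OF Ck_id] Ck_of_real[OF Ck_power2])+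
  have "T (\<lambda>t. of_real (\<alpha> + \<beta> * t + \<gamma> * t\<^sup>2)) x
      = T (\<lambda>t. (of_real \<alpha> * 1 + of_real \<beta> * of_real t) + of_real \<gamma> * of_real (t\<^sup>2)) x"
    by simp
  also have "\<dots> = T (\<lambda>t. of_real \<alpha> * 1) x + T (\<lambda>t. of_real \<beta> * of_real t) x
      + T (\<lambda>t. of_real \<gamma> * of_real (t\<^sup>2)) x"
    using Ck by (simp only: pos_lin_map_add Ck_add Ck_mult_left)
  also have "\<dots> = of_real (\<alpha> * a0 + \<beta> * a1 + \<gamma> * a2)"
    using Ck by (simp only: pos_lin_map_mult a0 a1 a2 of_real_add of_real_mult)
  finally show ?thesis .
qed

lemma pos_lin_map_sandwich:
  assumes u: "Ck k u" and bound: "\<forall>t\<in>unitI. \<bar>u t - u x\<bar> \<le> e + c * (t - x)\<^sup>2"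
    and a0: "T (\<lambda>t. 1) x = of_real a0" and a1: "T (\<lambda>t. of_real t) x = of_real a1"
    and a2: "T (\<lambda>t. of_real (t\<^sup>2)) x = of_real a2" and b: "T (\<lambda>t. of_real (u t)) x = of_real b"
  shows "\<bar>b - u x * a0\<bar> \<le> e * a0 + c * (a2 - 2 * x * a1 + x\<^sup>2 * a0)"
proof -
  have square: "c * (t - x)\<^sup>2 = c * x\<^sup>2 + (- 2 * c * x) * t + c * t\<^sup>2" for t
    by (simp add: power2_eq_square algebra_simps)
  have "b \<le> (u x + e + c * x\<^sup>2) * a0 + (- 2 * c * x) * a1 + c * a2"
    using bound square
    by (intro pos_lin_map_of_real_mono[OF u Ck_quadratic _ b pos_lin_map_quadratic[OF a0 a1 a2]])
      (fastforce simp: abs_le_iff)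
  moreover have "(u x - e - c * x\<^sup>2) * a0 + (2 * c * x) * a1 + (- c) * a2 \<le> b"
    using bound square
    by (intro pos_lin_map_of_real_mono[OF Ck_quadratic u _ pos_lin_map_quadratic[OF a0 a1 a2] b])
      (fastforce simp: abs_le_iff)
  ultimately show ?thesis
    by (simp add: abs_le_iff algebra_simps)
qed

end

lemma continuous_on_quadratic_modulus:
  fixes u :: "real \<Rightarrow> real"
  assumes u: "continuous_on S u" and S: "compact S" and e: "0 < e"
  obtains c where "0 \<le> c" "\<And>s t. s \<in> S \<Longrightarrow> t \<in> S \<Longrightarrow> \<bar>u t - u s\<bar> \<le> e + c * (t - s)\<^sup>2"
proof -
  obtain M where M: "\<And>t. t \<in> S \<Longrightarrow> \<bar>u t\<bar> \<le> M" and "0 \<le> M"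
    using compact_imp_bounded[OF compact_continuous_image[OF u S]]
    unfolding bounded_iff by (metis abs_ge_zero imageI order_trans real_norm_def)
  obtain d where d: "0 < d" "\<And>s t. s \<in> S \<Longrightarrow> t \<in> S \<Longrightarrow> dist t s < d \<Longrightarrow> dist (u t) (u s) < e"
    using compact_uniformly_continuous[OF u S] e unfolding uniformly_continuous_on_def by metis
  define c where "c = 2 * M / d\<^sup>2"
  have "0 \<le> c"
    using \<open>0 \<le> M\<close> by (simp add: c_def)
  moreover have "\<bar>u t - u s\<bar> \<le> e + c * (t - s)\<^sup>2" if st: "s \<in> S" "t \<in> S" for s t
  proof (cases "\<bar>t - s\<bar> < d")
    case True
    then show ?thesis
      using d(2)[OF st] \<open>0 \<le> c\<close> by (simp add: dist_real_def less_imp_le add_increasing2)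
  next
    case False
    then have "d\<^sup>2 \<le> (t - s)\<^sup>2"
      using d(1) by (metis abs_le_square_iff abs_of_pos not_less)
    then have "2 * M \<le> c * (t - s)\<^sup>2"
      using d(1) M[OF st(1)] by (simp add: c_def field_simps mult_left_mono)
    then show ?thesis
      using M[OF st(1)] M[OF st(2)] e by linarith
  qed
  ultimately show ?thesis
    using that by blast
qed

lemma korovkin_error_bound:
  fixes a0 a1 a2 b x y :: real
  assumes sandwich: "\<bar>b - y * a0\<bar> \<le> e * a0 + c * (a2 - 2 * x * a1 + x\<^sup>2 * a0)"
    and y: "\<bar>y\<bar> \<le> M" and x: "\<bar>x\<bar> \<le> 1" and c: "0 \<le> c" and e: "0 \<le> e"
  shows "\<bar>b - y\<bar> \<le> e + (M + e + 2 * c) * (\<bar>a0 - 1\<bar> + \<bar>a1 - x\<bar> + \<bar>a2 - x\<^sup>2\<bar>)"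
proof -
  define E0 E1 E2 where "E0 = \<bar>a0 - 1\<bar>" and "E1 = \<bar>a1 - x\<bar>" and "E2 = \<bar>a2 - x\<^sup>2\<bar>"
  have "\<bar>2 * x * (a1 - x)\<bar> \<le> 2 * E1"
    using x by (simp add: E1_def abs_mult mult_left_le_one_le)
  moreover have "\<bar>x\<^sup>2 * (a0 - 1)\<bar> \<le> E0"
    using x by (simp add: E0_def abs_mult abs_square_le_1 mult_left_le_one_le)
  moreover have "a2 - 2 * x * a1 + x\<^sup>2 * a0 = (a2 - x\<^sup>2) - 2 * x * (a1 - x) + x\<^sup>2 * (a0 - 1)"
    by (simp add: power2_eq_square algebra_simps)
  ultimately have Q: "a2 - 2 * x * a1 + x\<^sup>2 * a0 \<le> E0 + 2 * E1 + E2"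
    unfolding E2_def by linarith
  have "\<bar>y * (a0 - 1)\<bar> \<le> M * E0"
    using y by (simp add: E0_def abs_mult mult_right_mono)
  then have "\<bar>b - y\<bar> \<le> e * a0 + c * (a2 - 2 * x * a1 + x\<^sup>2 * a0) + M * E0"
    using sandwich abs_triangle_ineq[of "b - y * a0" "y * (a0 - 1)"] by (simp add: algebra_simps)
  also have "\<dots> \<le> e * (1 + E0) + c * (E0 + 2 * E1 + E2) + M * E0"
    using mult_left_mono[OF Q c] mult_left_mono[of a0 "1 + E0" e] e unfolding E0_def by linarith
  also have "\<dots> \<le> e + (M + e + 2 * c) * (E0 + E1 + E2)"
    using y c e by (simp add: E0_def E1_def E2_def algebra_simps add_mono mult_left_mono)
  finally show ?thesis
    by (simp add: E0_def E1_def E2_def)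
qed

definition test_defect :: "((real \<Rightarrow> 'a::real_normed_field) \<Rightarrow> real \<Rightarrow> 'a) \<Rightarrow> real \<Rightarrow> real" where
  "test_defect T x = norm (T (\<lambda>t. 1) x - 1) + norm (T (\<lambda>t. of_real t) x - of_real x)
     + norm (T (\<lambda>t. of_real (t\<^sup>2)) x - of_real (x\<^sup>2))"

lemma korovkin_estimate_real:
  fixes u :: "real \<Rightarrow> real"
  assumes u: "Ck k u" and e: "0 < e"
  obtains K where "0 \<le> K"
    "\<And>(T :: (real \<Rightarrow> 'a::real_normed_field) \<Rightarrow> real \<Rightarrow> 'a) x. pos_lin_map k T \<Longrightarrow> x \<in> unitI \<Longrightarrow>
       norm (T (\<lambda>t. of_real (u t)) x - of_real (u x)) \<le> e + K * test_defect T x"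
proof -
  have cont: "continuous_on unitI u"
    by (rule Ck_continuous_on[OF u])
  obtain c where c: "0 \<le> c" "\<And>s t. s \<in> unitI \<Longrightarrow> t \<in> unitI \<Longrightarrow> \<bar>u t - u s\<bar> \<le> e + c * (t - s)\<^sup>2"
    using continuous_on_quadratic_modulus[OF cont compact_Icc e] by blast
  obtain M where M: "0 < M" "\<And>t. t \<in> unitI \<Longrightarrow> \<bar>u t\<bar> \<le> M"
    using compact_imp_bounded[OF compact_continuous_image[OF cont compact_Icc], unfolded bounded_pos]
    by force
  have "norm (T (\<lambda>t. of_real (u t)) x - of_real (u x)) \<le> e + (M + e + 2 * c) * test_defect T x"
    if T: "pos_lin_map k T" and x: "x \<in> unitI" for T :: "(real \<Rightarrow> 'a) \<Rightarrow> real \<Rightarrow> 'a" and x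
  proof -
    obtain a0 where a0: "T (\<lambda>t. 1) x = of_real a0"
      using pos_lin_map_of_real[OF T x Ck_const, of 1] by auto
    obtain a1 where a1: "T (\<lambda>t. of_real t) x = of_real a1"
      using pos_lin_map_of_real[OF T x Ck_id] by auto
    obtain a2 where a2: "T (\<lambda>t. of_real (t\<^sup>2)) x = of_real a2"
      using pos_lin_map_of_real[OF T x Ck_power2] by auto
    obtain b where b: "T (\<lambda>t. of_real (u t)) x = of_real b"
      using pos_lin_map_of_real[OF T x u] by auto
    have "\<forall>t\<in>unitI. \<bar>u t - u x\<bar> \<le> e + c * (t - x)\<^sup>2"
      using c(2)[OF x] by blast
    then have "\<bar>b - u x * a0\<bar> \<le> e * a0 + c * (a2 - 2 * x * a1 + x\<^sup>2 * a0)"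
      by (rule pos_lin_map_sandwich[OF T x u _ a0 a1 a2 b])
    then have bound: "\<bar>b - u x\<bar> \<le> e + (M + e + 2 * c) * (\<bar>a0 - 1\<bar> + \<bar>a1 - x\<bar> + \<bar>a2 - x\<^sup>2\<bar>)"
      using M(2)[OF x] x c(1) e by (intro korovkin_error_bound) auto
    have nd: "norm (of_real p - of_real q :: 'a) = \<bar>p - q\<bar>" for p q
      by (simp flip: of_real_diff)
    show ?thesis
      using bound unfolding test_defect_def a0 a1 a2 b nd nd[of a0 1, unfolded of_real_1] .
  qed
  moreover have "0 \<le> M + e + 2 * c"
    using M(1) e c(1) by simp
  ultimately show ?thesis
    using that by blast
qed

lemma korovkin_estimate:
  fixes f :: "real \<Rightarrow> 'a::real_normed_field"
  assumes f: "Ck k f" and e: "0 < e"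
  obtains K where "0 \<le> K"
    "\<And>T x. pos_lin_map k T \<Longrightarrow> x \<in> unitI \<Longrightarrow> norm (T f x - f x) \<le> e + K * test_defect T x"
proof -
  obtain j :: 'a and u1 u2 where u: "Ck k u1" "Ck k u2"
    and f_eq: "f = (\<lambda>t. of_real (u1 t) + j * of_real (u2 t))"
    using Ck_real_coordinates[OF f] by blast
  define e' where "e' = e / (1 + norm j)"
  have "0 < 1 + norm j"
    by (simp add: add_pos_nonneg)
  then have e': "0 < e'" "(1 + norm j) * e' = e"
    using e by (simp_all add: e'_def)
  obtain K1 where K1: "0 \<le> K1" "\<And>(T :: (real \<Rightarrow> 'a) \<Rightarrow> real \<Rightarrow> 'a) x. pos_lin_map k T \<Longrightarrow> x \<in> unitI \<Longrightarrow>
      norm (T (\<lambda>t. of_real (u1 t)) x - of_real (u1 x)) \<le> e' + K1 * test_defect T x"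
    using korovkin_estimate_real[OF u(1) e'(1)] by blast
  obtain K2 where K2: "0 \<le> K2" "\<And>(T :: (real \<Rightarrow> 'a) \<Rightarrow> real \<Rightarrow> 'a) x. pos_lin_map k T \<Longrightarrow> x \<in> unitI \<Longrightarrow>
      norm (T (\<lambda>t. of_real (u2 t)) x - of_real (u2 x)) \<le> e' + K2 * test_defect T x"
    using korovkin_estimate_real[OF u(2) e'(1)] by blast
  have "norm (T f x - f x) \<le> e + (K1 + norm j * K2) * test_defect T x"
    if T: "pos_lin_map k T" and x: "x \<in> unitI" for T x
  proof -
    let ?A = "T (\<lambda>t. of_real (u1 t)) x - of_real (u1 x)"
    let ?B = "T (\<lambda>t. of_real (u2 t)) x - of_real (u2 x)"
    have "T f x - f x = ?A + j * ?B"
      using u unfolding f_eq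
      by (simp add: pos_lin_map_add[OF T x] pos_lin_map_mult[OF T x] Ck_of_real Ck_mult_left algebra_simps)
    then have "norm (T f x - f x) \<le> norm ?A + norm j * norm ?B"
      by (metis norm_mult norm_triangle_ineq)
    also have "\<dots> \<le> (e' + K1 * test_defect T x) + norm j * (e' + K2 * test_defect T x)"
      using K1(2)[OF T x] K2(2)[OF T x] by (intro add_mono mult_left_mono) auto
    finally show ?thesis
      using e'(2) by (simp add: algebra_simps)
  qed
  moreover have "0 \<le> K1 + norm j * K2"
    using K1(1) K2(1) by simp
  ultimately show ?thesis
    using that by blast
qed

lemma korovkin_uniform_limit_on:
  fixes T :: "nat \<Rightarrow> (real \<Rightarrow> 'a::real_normed_field) \<Rightarrow> real \<Rightarrow> 'a"
  assumes T: "\<And>n. pos_lin_map k (T n)" and S: "S \<subseteq> unitI"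
    and tests: "\<forall>g\<in>test_funs. uniform_limit S (\<lambda>n. T n g) g sequentially"
    and f: "Ck k f"
  shows "uniform_limit S (\<lambda>n. T n f) f sequentially"
proof (rule uniform_limitI)
  fix e :: real
  assume e: "0 < e"
  obtain K where K: "0 \<le> K" "\<And>T x. pos_lin_map k T \<Longrightarrow> x \<in> unitI \<Longrightarrow>
      norm (T f x - f x) \<le> e / 2 + K * test_defect T x"
    using korovkin_estimate[OF f, of "e / 2"] e by auto
  define \<eta> where "\<eta> = e / (6 * (K + 1))"
  have \<eta>: "0 < \<eta>" "K * (3 * \<eta>) < e / 2"
    using e K(1) by (auto simp: \<eta>_def field_simps)
  have conv: "\<forall>\<^sub>F n in sequentially. \<forall>x\<in>S. norm (T n g x - g x) < \<eta>" if "g \<in> test_funs" for g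
    using tests that \<eta>(1) by (simp add: uniform_limitD flip: dist_norm)
  have "(\<lambda>t. 1) \<in> test_funs" "(\<lambda>t. of_real t) \<in> test_funs" "(\<lambda>t. of_real (t\<^sup>2)) \<in> test_funs"
    by (simp_all add: test_funs_def)
  from conv[OF this(1)] conv[OF this(2)] conv[OF this(3)]
  have "\<forall>\<^sub>F n in sequentially. \<forall>x\<in>S. test_defect (T n) x < 3 * \<eta>"
    by eventually_elim (fastforce simp: test_defect_def)
  then show "\<forall>\<^sub>F n in sequentially. \<forall>x\<in>S. dist (T n f x) (f x) < e"
  proof (rule eventually_mono, intro ballI)
    fix n x
    assume "\<forall>x\<in>S. test_defect (T n) x < 3 * \<eta>" and x: "x \<in> S"
    then have "K * test_defect (T n) x \<le> K * (3 * \<eta>)"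
      using K(1) by (intro mult_left_mono) auto
    then show "dist (T n f x) (f x) < e"
      using K(2)[OF T, of x n] x S \<eta>(2) by (auto simp: dist_norm)
  qed
qed

theorem mainTheorem10:
  fixes k :: enat
    and T :: "nat \<Rightarrow> (real \<Rightarrow> 'a::real_normed_field) \<Rightarrow> real \<Rightarrow> 'a"
  assumes "\<forall>n. pos_lin_map k (T n)"
  shows "((\<forall>g\<in>test_funs. \<forall>x\<in>unitI. (\<lambda>n. T n g x) \<longlonglongrightarrow> g x) \<longrightarrow>
            (\<forall>f. Ck k f \<longrightarrow> (\<forall>x\<in>unitI. (\<lambda>n. T n f x) \<longlonglongrightarrow> f x)))
       \<and> ((\<forall>g\<in>test_funs. uniform_limit unitI (\<lambda>n. T n g) g sequentially) \<longrightarrow>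
            (\<forall>f. Ck k f \<longrightarrow> uniform_limit unitI (\<lambda>n. T n f) f sequentially))"
proof (intro conjI impI allI ballI)
  fix f :: "real \<Rightarrow> 'a" and x
  assume tests: "\<forall>g\<in>test_funs. \<forall>x\<in>unitI. (\<lambda>n. T n g x) \<longlonglongrightarrow> g x"
    and f: "Ck k f" and x: "x \<in> unitI"
  have "uniform_limit {x} (\<lambda>n. T n f) f sequentially"
    using tests x by (intro korovkin_uniform_limit_on[OF assms[rule_format] _ _ f]) auto
  then show "(\<lambda>n. T n f x) \<longlonglongrightarrow> f x"
    by simp
next
  fix f :: "real \<Rightarrow> 'a"
  assume "\<forall>g\<in>test_funs. uniform_limit unitI (\<lambda>n. T n g) g sequentially" and "Ck k f"
  then show "uniform_limit unitI (\<lambda>n. T n f) f sequentially"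
    by (rule korovkin_uniform_limit_on[OF assms[rule_format] order_refl])
qed

end
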